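(* Let $X\in\mathbb{R}^{n\times r}$ have linearly independent columns and let $A\in\mathbb{R}^{r\times r}$ be skewsymmetric. Let $Y$ be the random subset of $\{1,\dots,n\}$ with law $$\mathbb{P}(Y=\mathtt{C})=\frac{1}{\det(A+X^\top X)}\det\begin{bmatrix}0_{|\mathtt{C}|}&X_{\mathtt{C}:}\\-(X_{\mathtt{C}:})^\top&A\end{bmatrix}.$$ Then for every $T\subseteq\{1,\dots,n\}$, $$\mathbb{P}(T\subseteq Y)=\det\big(K_{TT}\big),\qquad K=X(A+X^\top X)^{-1}X^\top,$$ where $K_{TT}$ is the principal submatrix of $K$ indexed by $T$.
   Context: $X_{\mathtt{C}:}$ is the submatrix of $X$ with rows indexed by $\mathtt{C}$ in increasing order. $0_m$ is the $m\times m$ zero matrix. For $\mathtt{C}=\emptyset$ the block matrix is $A$. The determinant of the empty matrix is $1$. *)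

theory Defs
  imports "Jordan_Normal_Form.Determinant" "Jordan_Normal_Form.DL_Submatrix"
begin

text \<open>Inverse of a square matrix (meaningful when the matrix is invertible).\<close>
definition inv_mat :: "real mat \<Rightarrow> real mat" where
  "inv_mat M = (SOME B. B \<in> carrier_mat (dim_row M) (dim_row M) \<and>
                        M * B = 1\<^sub>m (dim_row M) \<and> B * M = 1\<^sub>m (dim_row M))"

definition rows_sub :: "real mat \<Rightarrow> nat set \<Rightarrow> real mat" where
  "rows_sub X C = submatrix X C UNIV"

definition dpp_weight :: "real mat \<Rightarrow> real mat \<Rightarrow> nat set \<Rightarrow> real" where
  "dpp_weight X A C = det (four_block_mat (0\<^sub>m (card C) (card C)) (rows_sub X C)
                                         (- transpose_mat (rows_sub X C)) A)"

definition dpp_prob :: "real mat \<Rightarrow> real mat \<Rightarrow> nat set \<Rightarrow> real" where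
  "dpp_prob X A C = dpp_weight X A C / det (A + transpose_mat X * X)"

definition dpp_kernel :: "real mat \<Rightarrow> real mat \<Rightarrow> real mat" where
  "dpp_kernel X A = X * inv_mat (A + transpose_mat X * X) * transpose_mat X"

end

theory Submission
  imports Defs
begin

(* Let B = [0_n, X; -X^T, A]. Replacing the columns of B indexed by {0..<n} - C with unit
   columns leaves a matrix whose determinant is the principal minor of B on C \<union> {n..<n+r},
   i.e. the weight of C. The determinant is linear in each column, so summing these
   determinants over all C containing T gives det (B + D), where D is the 0/1 diagonal matrix
   supported on {0..<n} - T. A block factorisation through G = A + X^T X, which is invertible
   because v^T G v = |X v|^2 for skew A, yields det (B + D) = det G * det (I - P + K P), where
   P = I - D on the first n coordinates; by the same unit-column argument the last factor is
   the principal minor K_TT. *)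

definition unit_cols :: "'a :: zero_neq_one mat \<Rightarrow> nat set \<Rightarrow> 'a mat" where
  "unit_cols M S = mat (dim_row M) (dim_col M)
     (\<lambda>(i, j). if j \<in> S then (if i = j then 1 else 0) else M $$ (i, j))"

definition diag_indicator_mat :: "nat \<Rightarrow> nat set \<Rightarrow> 'a :: zero_neq_one mat" where
  "diag_indicator_mat m J = mat m m (\<lambda>(i, j). if i = j \<and> i \<in> J then 1 else 0)"

lemma unit_cols_carrier [simp]: "M \<in> carrier_mat m m \<Longrightarrow> unit_cols M S \<in> carrier_mat m m"
  unfolding unit_cols_def by auto

lemma unit_cols_empty [simp]: "unit_cols M {} = M"
  unfolding unit_cols_def by (rule eq_matI) auto

lemma unit_cols_unit_cols: "unit_cols (unit_cols M S) S' = unit_cols M (S \<union> S')"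
  unfolding unit_cols_def by (rule eq_matI) auto

lemma diag_indicator_mat_carrier [simp]: "diag_indicator_mat m J \<in> carrier_mat m m"
  unfolding diag_indicator_mat_def by auto

lemma det_col_add:
  fixes M1 M2 M :: "'a :: comm_ring_1 mat"
  assumes M: "M1 \<in> carrier_mat m m" "M2 \<in> carrier_mat m m" "M \<in> carrier_mat m m"
    and j: "j < m"
    and other_cols: "\<And>i k. i < m \<Longrightarrow> k < m \<Longrightarrow> k \<noteq> j \<Longrightarrow>
                             M1 $$ (i, k) = M $$ (i, k) \<and> M2 $$ (i, k) = M $$ (i, k)"
    and col_j: "\<And>i. i < m \<Longrightarrow> M $$ (i, j) = M1 $$ (i, j) + M2 $$ (i, j)"
  shows "det M = det M1 + det M2"
proof -
  have same_cofactor: "cofactor M1 i j = cofactor M i j" "cofactor M2 i j = cofactor M i j"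
    if "i < m" for i
  proof -
    have "mat_delete N i j = mat_delete M i j" if "N = M1 \<or> N = M2" for N
      by (rule eq_matI) (use M that other_cols in \<open>auto simp: mat_delete_def\<close>)
    then show "cofactor M1 i j = cofactor M i j" "cofactor M2 i j = cofactor M i j"
      by (auto simp: cofactor_def)
  qed
  have "det M = (\<Sum>i<m. M $$ (i, j) * cofactor M i j)"
    by (rule laplace_expansion_column[OF M(3) j])
  also have "\<dots> = (\<Sum>i<m. M1 $$ (i, j) * cofactor M1 i j) + (\<Sum>i<m. M2 $$ (i, j) * cofactor M2 i j)"
    by (simp add: sum.distrib[symmetric] col_j same_cofactor distrib_right)
  also have "\<dots> = det M1 + det M2"
    using laplace_expansion_column[OF M(1) j] laplace_expansion_column[OF M(2) j] by simp
  finally show ?thesis .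
qed

lemma det_add_diag_indicator_mat:
  fixes M :: "'a :: comm_ring_1 mat"
  assumes M: "M \<in> carrier_mat m m" and J: "J \<subseteq> {0..<m}"
  shows "det (M + diag_indicator_mat m J) = (\<Sum>S\<in>Pow J. det (unit_cols M S))"
proof -
  have "finite J" using J finite_subset by blast
  then show ?thesis using M J
  proof (induction J arbitrary: M rule: finite_induct)
    case empty
    have "M + diag_indicator_mat m {} = M"
      using empty.prems by (intro eq_matI) (auto simp: diag_indicator_mat_def)
    then show ?case by simp
  next
    case (insert j J)
    have j: "j < m" using insert.prems by auto
    have "det (M + diag_indicator_mat m (insert j J))
        = det (M + diag_indicator_mat m J) + det (unit_cols M {j} + diag_indicator_mat m J)"
      by (rule det_col_add[OF _ _ _ j])
         (use insert j in \<open>auto simp: diag_indicator_mat_def unit_cols_def\<close>)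
    also have "\<dots> = (\<Sum>S\<in>Pow J. det (unit_cols M S)) + (\<Sum>S\<in>Pow J. det (unit_cols M (insert j S)))"
      using insert by (simp add: unit_cols_unit_cols)
    also have "(\<Sum>S\<in>Pow J. det (unit_cols M (insert j S))) = (\<Sum>S\<in>insert j ` Pow J. det (unit_cols M S))"
    proof -
      have "inj_on (insert j) (Pow J)"
        using insert.hyps(2) by (meson PowD inj_onI insert_ident subset_iff)
      then show ?thesis by (simp add: sum.reindex)
    qed
    also have "(\<Sum>S\<in>Pow J. det (unit_cols M S)) + \<dots> = (\<Sum>S\<in>Pow (insert j J). det (unit_cols M S))"
      unfolding Pow_insert by (rule sum.union_disjoint[symmetric]) (use insert.hyps in auto)
    finally show ?case .
  qed
qed

lemma submatrix_dims_index:
  assumes I: "I \<subseteq> {0..<dim_row M}" and J: "J \<subseteq> {0..<dim_col M}"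
  shows "dim_row (submatrix M I J) = card I" "dim_col (submatrix M I J) = card J"
    and "a < card I \<Longrightarrow> b < card J \<Longrightarrow> submatrix M I J $$ (a, b) = M $$ (pick I a, pick J b)"
proof -
  have "{i. i < dim_row M \<and> i \<in> I} = I" "{j. j < dim_col M \<and> j \<in> J} = J"
    using I J by auto
  then show "dim_row (submatrix M I J) = card I" "dim_col (submatrix M I J) = card J"
    and "a < card I \<Longrightarrow> b < card J \<Longrightarrow> submatrix M I J $$ (a, b) = M $$ (pick I a, pick J b)"
    by (simp_all add: dim_submatrix submatrix_index)
qed

lemma det_conj_permutes:
  fixes M :: "'a :: comm_ring_1 mat"
  assumes M: "M \<in> carrier_mat m m" and p: "p permutes {0..<m}"
  shows "det (mat m m (\<lambda>(i, j). M $$ (p i, p j))) = det M"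
proof -
  define N where "N = mat m m (\<lambda>(i, j). M $$ (p i, j))"
  have N: "N \<in> carrier_mat m m" unfolding N_def by simp
  have p_lt: "i < m \<Longrightarrow> p i < m" for i using permutes_in_image[OF p] by simp
  have "transpose_mat (mat m m (\<lambda>(i, j). M $$ (p i, p j))) = mat m m (\<lambda>(i, j). transpose_mat N $$ (p i, j))"
    unfolding N_def by (rule eq_matI) (auto simp: p_lt)
  then have "det (mat m m (\<lambda>(i, j). M $$ (p i, p j))) = signof p * det (transpose_mat N)"
    using det_transpose[of "mat m m (\<lambda>(i, j). M $$ (p i, p j))" m] det_permute_rows[of "transpose_mat N" m p] N p
    by auto
  also have "\<dots> = signof p * (signof p * det M)"
    using det_transpose[OF N] det_permute_rows[OF M p] unfolding N_def by simp
  also have "\<dots> = det M" by (simp add: sign_def)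
  finally show ?thesis .
qed

lemma card_less_elems_lt_card:
  fixes R :: "'a :: preorder set"
  assumes "finite R" "x \<in> R"
  shows "card {y \<in> R. y < x} < card R"
proof -
  have "card {y \<in> R. y < x} \<le> card (R - {x})"
    using assms(1) by (intro card_mono) auto
  also have "\<dots> < card R"
    using assms by (rule card_Diff1_less)
  finally show ?thesis .
qed

lemma pick_concat_permutes:
  assumes RS: "R \<union> S = {0..<m}" "R \<inter> S = {}"
  shows "(\<lambda>a. if a < card R then pick R a else if a < m then pick S (a - card R) else a) permutes {0..<m}"
    (is "?g permutes _")
proof -
  have fin: "finite R" "finite S"
    using finite_subset[of _ "{0..<m}"] RS(1) by blast+
  have m: "m = card R + card S"
    using card_Un_disjoint[OF fin RS(2)] RS(1) by simp
  have "?g a \<in> {0..<m}" if "a \<in> {0..<m}" for a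
  proof (cases "a < card R")
    case True
    then show ?thesis using RS pick_in_set[OF disjI1, of a R] by auto
  next
    case False
    then have "a - card R < card S" using that m by auto
    then show ?thesis using RS pick_in_set[OF disjI1, of "a - card R" S] that False by auto
  qed
  then have "?g ` {0..<m} \<subseteq> {0..<m}" by blast
  moreover have "{0..<m} \<subseteq> ?g ` {0..<m}"
  proof
    fix x assume "x \<in> {0..<m}"
    then consider "x \<in> R" | "x \<in> S" using RS by blast
    then show "x \<in> ?g ` {0..<m}"
    proof cases
      case 1
      then have "x = ?g (card {y \<in> R. y < x})" "card {y \<in> R. y < x} \<in> {0..<m}"
        using pick_card_in_set[OF 1] card_less_elems_lt_card[OF fin(1) 1] m by simp_all
      then show ?thesis by (rule image_eqI)
    next
      case 2
      then have "x = ?g (card R + card {y \<in> S. y < x})" "card R + card {y \<in> S. y < x} \<in> {0..<m}"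
        using pick_card_in_set[OF 2] card_less_elems_lt_card[OF fin(2) 2] m by simp_all
      then show ?thesis by (rule image_eqI)
    qed
  qed
  ultimately have img: "?g ` {0..<m} = {0..<m}" by (rule subset_antisym)
  have "inj_on ?g {0..<m}"
    by (rule eq_card_imp_inj_on) (simp_all only: img finite_atLeastLessThan)
  with img have "bij_betw ?g {0..<m} {0..<m}" unfolding bij_betw_def by blast
  moreover have "?g a = a" if "a \<notin> {0..<m}" for a
    using that m by simp
  ultimately show ?thesis by (rule bij_imp_permutes)
qed

lemma det_unit_cols:
  fixes M :: "'a :: idom mat"
  assumes M: "M \<in> carrier_mat m m" and S: "S \<subseteq> {0..<m}"
  shows "det (unit_cols M S) = det (submatrix M ({0..<m} - S) ({0..<m} - S))"
proof -
  define R where "R = {0..<m} - S"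
  define k where "k = card R"
  define g where "g = (\<lambda>a. if a < k then pick R a else if a < m then pick S (a - k) else a)"
  have RS: "R \<union> S = {0..<m}" "R \<inter> S = {}" using S unfolding R_def by auto
  have g: "g permutes {0..<m}" unfolding g_def k_def by (rule pick_concat_permutes[OF RS])
  have m: "m = k + card S"
    using card_Un_disjoint[of R S] RS finite_subset[OF S] unfolding k_def R_def by simp
  have g_lt: "g a < m" if "a < m" for a using permutes_in_image[OF g] that by simp
  have g_eq: "g a = g b \<longleftrightarrow> a = b" for a b using permutes_inj[OF g] by (simp add: inj_eq)
  have gR: "g a = pick R a" "g a \<notin> S" if "a < k" for a
    using that pick_in_set[OF disjI1, of a R] unfolding g_def k_def R_def by auto
  have gS: "g a \<in> S" if "k \<le> a" "a < m" for a
    using that m pick_in_set[OF disjI1, of "a - k" S] unfolding g_def by auto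
  define Q where "Q = submatrix M R R"
  have R_sub: "R \<subseteq> {0..<dim_row M}" "R \<subseteq> {0..<dim_col M}" using M unfolding R_def by auto
  have Q: "Q \<in> carrier_mat k k"
    unfolding Q_def k_def using submatrix_dims_index(1,2)[OF R_sub] by auto
  have Q_index: "Q $$ (a, b) = M $$ (g a, g b)" if "a < k" "b < k" for a b
    using submatrix_dims_index(3)[OF R_sub] that gR(1) unfolding Q_def k_def by simp
  define Y where "Y = mat (m - k) k (\<lambda>(a, b). M $$ (g (k + a), g b))"
  (* g lists R before S, so conjugating by g moves the unit columns to an identity block
     in the lower right corner, above which there are only zeros. *)
  have "mat m m (\<lambda>(a, b). unit_cols M S $$ (g a, g b)) = four_block_mat Q (0\<^sub>m k (m - k)) Y (1\<^sub>m (m - k))"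
  proof (rule eq_matI)
    fix a b assume "a < dim_row (four_block_mat Q (0\<^sub>m k (m - k)) Y (1\<^sub>m (m - k)))"
      "b < dim_col (four_block_mat Q (0\<^sub>m k (m - k)) Y (1\<^sub>m (m - k)))"
    then have ab: "a < m" "b < m" using Q m by auto
    show "mat m m (\<lambda>(a, b). unit_cols M S $$ (g a, g b)) $$ (a, b)
        = four_block_mat Q (0\<^sub>m k (m - k)) Y (1\<^sub>m (m - k)) $$ (a, b)"
      using ab M Q m g_lt[OF ab(1)] g_lt[OF ab(2)] gR[of b] gS[of b] g_eq[of a b] Q_index[of a b]
      by (cases "a < k"; cases "b < k") (auto simp: unit_cols_def Y_def)
  qed (use Q m in auto)
  then have "det (unit_cols M S) = det (four_block_mat Q (0\<^sub>m k (m - k)) Y (1\<^sub>m (m - k)))"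
    using det_conj_permutes[OF unit_cols_carrier[OF M] g, of S] by simp
  also have "\<dots> = det Q"
    by (subst det_four_block_mat_upper_right_zero[OF Q refl]) (auto simp: Y_def)
  finally show ?thesis unfolding Q_def R_def .
qed

lemma four_block_gram_factorization:
  fixes X A Gi P :: "'a :: comm_ring_1 mat"
  defines "G \<equiv> A + transpose_mat X * X" and "W \<equiv> Gi * (transpose_mat X * P)"
  assumes X: "X \<in> carrier_mat n r" and A: "A \<in> carrier_mat r r" and P: "P \<in> carrier_mat n n"
    and Gi: "Gi \<in> carrier_mat r r" and right_inv: "G * Gi = 1\<^sub>m r"
  shows "four_block_mat (1\<^sub>m n) (0\<^sub>m n r) (transpose_mat X) (1\<^sub>m r)
           * four_block_mat (1\<^sub>m n - P) X (- transpose_mat X) A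
       = four_block_mat (1\<^sub>m n) X (0\<^sub>m r n) G
           * four_block_mat (1\<^sub>m n - P + X * W) (0\<^sub>m n r) (- W) (1\<^sub>m r)"
proof -
  define Xt where "Xt = transpose_mat X"
  have Xt: "Xt \<in> carrier_mat r n" unfolding Xt_def using X by simp
  have G: "G \<in> carrier_mat r r" unfolding G_def using X A by simp
  have XtP: "Xt * P \<in> carrier_mat r n" using Xt P by simp
  have W: "W \<in> carrier_mat r n" unfolding W_def Xt_def[symmetric] using Gi XtP by simp
  have Kc: "1\<^sub>m n - P + X * W \<in> carrier_mat n n" using P X W by simp
  have "four_block_mat (1\<^sub>m n) (0\<^sub>m n r) Xt (1\<^sub>m r) * four_block_mat (1\<^sub>m n - P) X (- Xt) A
      = four_block_mat (1\<^sub>m n - P) X (- (Xt * P)) G"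
  proof -
    have "Xt * (1\<^sub>m n - P) + 1\<^sub>m r * - Xt = - (Xt * P)"
      using mult_minus_distrib_mat[OF Xt one_carrier_mat P] Xt XtP by (intro eq_matI) auto
    moreover have "Xt * X + 1\<^sub>m r * A = G"
      unfolding G_def Xt_def using X A by (intro eq_matI) auto
    ultimately show ?thesis
      using X A P Xt by (subst mult_four_block_mat[of _ n n _ r _ r]) auto
  qed
  also have "\<dots> = four_block_mat (1\<^sub>m n) X (0\<^sub>m r n) G
                   * four_block_mat (1\<^sub>m n - P + X * W) (0\<^sub>m n r) (- W) (1\<^sub>m r)"
  proof -
    have "1\<^sub>m n * (1\<^sub>m n - P + X * W) + X * - W = 1\<^sub>m n - P"
      using P X W Kc by (intro eq_matI) auto
    moreover have "0\<^sub>m r n * (1\<^sub>m n - P + X * W) + G * - W = - (Xt * P)"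
    proof -
      have "G * W = Xt * P"
        unfolding W_def Xt_def[symmetric] using G Gi XtP right_inv
        by (simp add: left_mult_one_mat flip: assoc_mult_mat)
      then show ?thesis using G W Kc XtP by (intro eq_matI) (auto simp: left_mult_zero_mat[OF Kc])
    qed
    ultimately show ?thesis
      using X G Kc W XtP by (subst mult_four_block_mat[of _ n n _ r _ r]) auto
  qed
  finally show ?thesis unfolding Xt_def .
qed

lemma det_four_block_gram_factor:
  fixes X A Gi P :: "'a :: idom mat"
  defines "G \<equiv> A + transpose_mat X * X"
  assumes X: "X \<in> carrier_mat n r" and A: "A \<in> carrier_mat r r" and P: "P \<in> carrier_mat n n"
    and Gi: "Gi \<in> carrier_mat r r" and right_inv: "G * Gi = 1\<^sub>m r"
  shows "det (four_block_mat (1\<^sub>m n - P) X (- transpose_mat X) A)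
       = det G * det (1\<^sub>m n - P + X * Gi * transpose_mat X * P)"
proof -
  define W where "W = Gi * (transpose_mat X * P)"
  define Kc where "Kc = 1\<^sub>m n - P + X * W"
  have Xt: "transpose_mat X \<in> carrier_mat r n" using X by simp
  have G: "G \<in> carrier_mat r r" unfolding G_def using X A by simp
  have XtP: "transpose_mat X * P \<in> carrier_mat r n" using Xt P by simp
  have W: "W \<in> carrier_mat r n" unfolding W_def using Gi XtP by simp
  have Kc: "Kc \<in> carrier_mat n n" unfolding Kc_def using P X W by simp
  define L where "L = four_block_mat (1\<^sub>m n) (0\<^sub>m n r) (transpose_mat X) (1\<^sub>m r)"
  define M where "M = four_block_mat (1\<^sub>m n - P) X (- transpose_mat X) A"
  define U where "U = four_block_mat (1\<^sub>m n) X (0\<^sub>m r n) G"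
  define R where "R = four_block_mat Kc (0\<^sub>m n r) (- W) (1\<^sub>m r)"
  have "L * M = U * R"
    unfolding L_def M_def U_def R_def Kc_def W_def G_def
    by (rule four_block_gram_factorization[OF X A P Gi right_inv[unfolded G_def]])
  moreover have "L \<in> carrier_mat (n + r) (n + r)" "M \<in> carrier_mat (n + r) (n + r)"
    "U \<in> carrier_mat (n + r) (n + r)" "R \<in> carrier_mat (n + r) (n + r)"
    unfolding L_def M_def U_def R_def using X A P G Kc W Xt by auto
  ultimately have "det L * det M = det U * det R"
    using det_mult by metis
  moreover have "det L = 1"
    unfolding L_def using det_four_block_mat_upper_right_zero[OF one_carrier_mat refl Xt one_carrier_mat] by simp
  moreover have "det U = det G"
    unfolding U_def using det_four_block_mat_lower_left_zero[OF one_carrier_mat X refl G] by simp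
  moreover have "det R = det Kc"
    unfolding R_def using det_four_block_mat_upper_right_zero[OF Kc refl _ one_carrier_mat] W by simp
  moreover have "X * W = X * Gi * transpose_mat X * P"
  proof -
    have "X * Gi * transpose_mat X * P = X * Gi * (transpose_mat X * P)"
      by (rule assoc_mult_mat[OF mult_carrier_mat[OF X Gi] Xt P])
    also have "\<dots> = X * W"
      unfolding W_def by (rule assoc_mult_mat[OF X Gi XtP])
    finally show ?thesis by simp
  qed
  ultimately show ?thesis
    unfolding M_def Kc_def by simp
qed

lemma mult_diag_indicator_mat_index:
  fixes K :: "'a :: semiring_1 mat"
  assumes K: "K \<in> carrier_mat m n" and i: "i < m" and j: "j < n"
  shows "(K * diag_indicator_mat n T) $$ (i, j) = (if j \<in> T then K $$ (i, j) else 0)"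
proof -
  have "(K * diag_indicator_mat n T) $$ (i, j) = (\<Sum>k\<in>{0..<n}. K $$ (i, k) * (if k = j \<and> j \<in> T then 1 else 0))"
    using K i j by (auto simp: diag_indicator_mat_def scalar_prod_def intro!: sum.cong)
  also have "\<dots> = (if j \<in> T then K $$ (i, j) else 0)"
    using j by (simp add: if_distrib[of "(*) _"] sum.delta cong: if_cong)
  finally show ?thesis .
qed

lemma one_minus_diag_indicator_plus_mult:
  fixes K :: "'a :: comm_ring_1 mat"
  assumes K: "K \<in> carrier_mat n n"
  shows "1\<^sub>m n - diag_indicator_mat n T + K * diag_indicator_mat n T = unit_cols K ({0..<n} - T)"
  using K mult_diag_indicator_mat_index[OF K]
  by (intro eq_matI) (auto simp: unit_cols_def diag_indicator_mat_def)

lemma skew_quadratic_form_eq_0: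
  fixes A :: "real mat"
  assumes A: "A \<in> carrier_mat r r" and skew: "transpose_mat A = - A" and v: "v \<in> carrier_vec r"
  shows "v \<bullet> (A *\<^sub>v v) = 0"
proof -
  have "v \<bullet> (A *\<^sub>v v) = (transpose_mat A *\<^sub>v v) \<bullet> v"
    using transpose_vec_mult_scalar[OF A v v] by simp
  also have "\<dots> = - ((A *\<^sub>v v) \<bullet> v)" unfolding skew using A v by simp
  also have "(A *\<^sub>v v) \<bullet> v = v \<bullet> (A *\<^sub>v v)" using A v by (intro comm_scalar_prod[of _ r]) auto
  finally show ?thesis by simp
qed

lemma det_skew_plus_gram_neq_0:
  fixes X A :: "real mat"
  assumes X: "X \<in> carrier_mat n r" and A: "A \<in> carrier_mat r r" and skew: "transpose_mat A = - A"
    and indep: "\<forall>v \<in> carrier_vec r. X *\<^sub>v v = 0\<^sub>v n \<longrightarrow> v = 0\<^sub>v r"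
  shows "det (A + transpose_mat X * X) \<noteq> 0"
proof
  have G: "A + transpose_mat X * X \<in> carrier_mat r r" using X A by simp
  assume "det (A + transpose_mat X * X) = 0"
  then obtain v where v: "v \<in> carrier_vec r" "v \<noteq> 0\<^sub>v r"
    and Gv: "(A + transpose_mat X * X) *\<^sub>v v = 0\<^sub>v r"
    using det_0_iff_vec_prod_zero_field[OF G] by auto
  have "0 = v \<bullet> ((A + transpose_mat X * X) *\<^sub>v v)" using Gv v by simp
  also have "(A + transpose_mat X * X) *\<^sub>v v = A *\<^sub>v v + transpose_mat X *\<^sub>v (X *\<^sub>v v)"
    using X A v by (simp add: add_mult_distrib_mat_vec)
  also have "v \<bullet> \<dots> = v \<bullet> (A *\<^sub>v v) + v \<bullet> (transpose_mat X *\<^sub>v (X *\<^sub>v v))"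
    using X A v by (simp add: scalar_prod_add_distrib[of v r])
  also have "v \<bullet> (transpose_mat X *\<^sub>v (X *\<^sub>v v)) = (X *\<^sub>v v) \<bullet> (X *\<^sub>v v)"
    using X v by (simp add: transpose_vec_mult_scalar[symmetric] comm_scalar_prod[of v r])
  finally have "(X *\<^sub>v v) \<bullet> (X *\<^sub>v v) = 0"
    using skew_quadratic_form_eq_0[OF A skew v(1)] by simp
  then have "X *\<^sub>v v = 0\<^sub>v n"
    using conjugate_square_eq_0_vec[of "X *\<^sub>v v" n] X v(1) by simp
  then show False using indep v by auto
qed

lemma inv_mat_right_inverse:
  assumes M: "M \<in> carrier_mat m m" and det: "det M \<noteq> 0"
  shows "inv_mat M \<in> carrier_mat m m" "M * inv_mat M = 1\<^sub>m m"
proof -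
  obtain B where "B \<in> carrier_mat m m" "B * M = 1\<^sub>m m" "M * B = 1\<^sub>m m"
    using det_non_zero_imp_unit[OF M det] unfolding Units_def by (auto simp: ring_mat_simps)
  then have "\<exists>B. B \<in> carrier_mat (dim_row M) (dim_row M) \<and> M * B = 1\<^sub>m (dim_row M) \<and> B * M = 1\<^sub>m (dim_row M)"
    using M by auto
  from someI_ex[OF this] show "inv_mat M \<in> carrier_mat m m" "M * inv_mat M = 1\<^sub>m m"
    using M unfolding inv_mat_def by auto
qed

lemma pick_Un_interval:
  assumes C: "C \<subseteq> {0..<n}"
  shows pick_Un_interval_low: "a < card C \<Longrightarrow> pick (C \<union> {n..<n + r}) a = pick C a"
    and pick_Un_interval_high: "b < r \<Longrightarrow> pick (C \<union> {n..<n + r}) (card C + b) = n + b"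
proof -
  assume a: "a < card C"
  have x: "pick C a \<in> C" "pick C a < n" using pick_in_set[OF disjI1, OF a] C by auto
  then have "{y \<in> C \<union> {n..<n + r}. y < pick C a} = {y \<in> C. y < pick C a}" by auto
  then have "card {y \<in> C \<union> {n..<n + r}. y < pick C a} = a" using card_pick[OF disjI1, OF a] by simp
  then show "pick (C \<union> {n..<n + r}) a = pick C a"
    using pick_card_in_set[of "pick C a" "C \<union> {n..<n + r}"] x by simp
next
  have fin: "finite C" using C finite_subset by blast
  assume b: "b < r"
  have "{y \<in> C \<union> {n..<n + r}. y < n + b} = C \<union> {n..<n + b}" using C b by auto
  moreover have "card (C \<union> {n..<n + b}) = card C + b"
    using C fin by (subst card_Un_disjoint) auto
  ultimately show "pick (C \<union> {n..<n + r}) (card C + b) = n + b"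
    using pick_card_in_set[of "n + b" "C \<union> {n..<n + r}"] b by simp
qed

lemma rows_sub_carrier_index:
  assumes X: "X \<in> carrier_mat n r" and C: "C \<subseteq> {0..<n}"
  shows "rows_sub X C \<in> carrier_mat (card C) r"
    and "a < card C \<Longrightarrow> j < r \<Longrightarrow> rows_sub X C $$ (a, j) = X $$ (pick C a, j)"
proof -
  have "{i. i < dim_row X \<and> i \<in> C} = C" "{j. j < dim_col X \<and> j \<in> UNIV} = {0..<r}"
    using X C by auto
  then have dims: "card {i. i < dim_row X \<and> i \<in> C} = card C" "card {j. j < dim_col X \<and> j \<in> UNIV} = r"
    by simp_all
  then show "rows_sub X C \<in> carrier_mat (card C) r"
    unfolding rows_sub_def by (intro carrier_matI) (simp_all only: dim_submatrix)
  show "a < card C \<Longrightarrow> j < r \<Longrightarrow> rows_sub X C $$ (a, j) = X $$ (pick C a, j)"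
    unfolding rows_sub_def using dims submatrix_index[of a X C j UNIV] by (simp add: pick_UNIV)
qed

lemma dpp_weight_eq_principal_minor:
  assumes X: "X \<in> carrier_mat n r" and A: "A \<in> carrier_mat r r" and C: "C \<subseteq> {0..<n}"
  shows "dpp_weight X A C = det (submatrix (four_block_mat (0\<^sub>m n n) X (- transpose_mat X) A)
                                   (C \<union> {n..<n + r}) (C \<union> {n..<n + r}))"
proof -
  define B where "B = four_block_mat (0\<^sub>m n n) X (- transpose_mat X) A"
  define I where "I = C \<union> {n..<n + r}"
  define c where "c = card C"
  define XC where "XC = rows_sub X C"
  have XC: "XC \<in> carrier_mat c r" unfolding XC_def c_def by (rule rows_sub_carrier_index(1)[OF X C])
  have I: "I \<subseteq> {0..<dim_row B}" "I \<subseteq> {0..<dim_col B}"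
    using X A C unfolding B_def I_def by auto
  have card_I: "card I = c + r"
    unfolding I_def c_def using C finite_subset[OF C] by (subst card_Un_disjoint) auto
  have pick_I: "pick I a = (if a < c then pick C a else n + (a - c))" if "a < c + r" for a
    using that pick_Un_interval_low[OF C] pick_Un_interval_high[OF C, of "a - c" r]
    unfolding I_def c_def by (cases "a < c") auto
  have pick_C: "pick C a < n" if "a < c" for a
    using pick_in_set[OF disjI1, of a C] that C unfolding c_def by auto
  have "four_block_mat (0\<^sub>m c c) XC (- transpose_mat XC) A = submatrix B I I"
  proof (rule eq_matI)
    fix a b assume "a < dim_row (submatrix B I I)" "b < dim_col (submatrix B I I)"
    then have ab: "a < c + r" "b < c + r" using submatrix_dims_index(1,2)[OF I] card_I by auto
    show "four_block_mat (0\<^sub>m c c) XC (- transpose_mat XC) A $$ (a, b) = submatrix B I I $$ (a, b)"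
      using submatrix_dims_index(3)[OF I] card_I ab pick_I[OF ab(1)] pick_I[OF ab(2)]
        pick_C[of a] pick_C[of b] rows_sub_carrier_index(2)[OF X C] X A XC
      unfolding B_def XC_def c_def by (cases "a < card C"; cases "b < card C") auto
  qed (use XC A submatrix_dims_index(1,2)[OF I] card_I in auto)
  then show ?thesis
    unfolding dpp_weight_def B_def I_def XC_def c_def by simp
qed

lemma dpp_weight_eq_det_unit_cols:
  assumes X: "X \<in> carrier_mat n r" and A: "A \<in> carrier_mat r r" and C: "C \<subseteq> {0..<n}"
  shows "dpp_weight X A C
       = det (unit_cols (four_block_mat (0\<^sub>m n n) X (- transpose_mat X) A) ({0..<n} - C))"
proof -
  have B: "four_block_mat (0\<^sub>m n n) X (- transpose_mat X) A \<in> carrier_mat (n + r) (n + r)"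
    using X A by simp
  have "{0..<n} - C \<subseteq> {0..<n + r}" by auto
  moreover have "{0..<n + r} - ({0..<n} - C) = C \<union> {n..<n + r}" using C by auto
  ultimately show ?thesis
    using det_unit_cols[OF B] unfolding dpp_weight_eq_principal_minor[OF X A C] by metis
qed

theorem mainTheorem7:
  fixes X A :: "real mat" and n r :: nat and T :: "nat set"
  assumes X: "X \<in> carrier_mat n r"
    and A: "A \<in> carrier_mat r r"
    and skew: "transpose_mat A = - A"
    and indep: "\<forall>v \<in> carrier_vec r. X *\<^sub>v v = 0\<^sub>v n \<longrightarrow> v = 0\<^sub>v r"
    and T: "T \<subseteq> {0..<n}"
  shows "(\<Sum>C \<in> {C. C \<subseteq> {0..<n} \<and> T \<subseteq> C}. dpp_prob X A C)
           = det (submatrix (dpp_kernel X A) T T)"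
proof -
  define G where "G = A + transpose_mat X * X"
  define B where "B = four_block_mat (0\<^sub>m n n) X (- transpose_mat X) A"
  define D :: "real mat" where "D = diag_indicator_mat n T"
  have G: "G \<in> carrier_mat r r" and det_G: "det G \<noteq> 0"
    unfolding G_def using X A det_skew_plus_gram_neq_0[OF X A skew indep] by auto
  note G_inv = inv_mat_right_inverse[OF G det_G]
  have B: "B \<in> carrier_mat (n + r) (n + r)" unfolding B_def using X A by simp
  have "(\<Sum>C \<in> {C. C \<subseteq> {0..<n} \<and> T \<subseteq> C}. dpp_weight X A C)
      = (\<Sum>C \<in> {C. C \<subseteq> {0..<n} \<and> T \<subseteq> C}. det (unit_cols B ({0..<n} - C)))"
    unfolding B_def by (rule sum.cong) (auto simp: dpp_weight_eq_det_unit_cols[OF X A])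
  also have "\<dots> = (\<Sum>S \<in> Pow ({0..<n} - T). det (unit_cols B S))"
    by (rule sum.reindex_bij_witness[where i = "\<lambda>S. {0..<n} - S" and j = "\<lambda>C. {0..<n} - C"])
       (use T in auto)
  also have "\<dots> = det (B + diag_indicator_mat (n + r) ({0..<n} - T))"
    by (rule det_add_diag_indicator_mat[symmetric, OF B]) auto
  also have "B + diag_indicator_mat (n + r) ({0..<n} - T) = four_block_mat (1\<^sub>m n - D) X (- transpose_mat X) A"
    unfolding B_def D_def using X A by (intro eq_matI) (auto simp: diag_indicator_mat_def)
  also have "det \<dots> = det G * det (1\<^sub>m n - D + dpp_kernel X A * D)"
    using det_four_block_gram_factor[OF X A _ G_inv[unfolded G_def], of D]
    unfolding dpp_kernel_def G_def D_def by simp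
  also have "1\<^sub>m n - D + dpp_kernel X A * D = unit_cols (dpp_kernel X A) ({0..<n} - T)"
    unfolding D_def by (rule one_minus_diag_indicator_plus_mult) (use X G_inv(1) in \<open>simp add: dpp_kernel_def G_def\<close>)
  also have "det \<dots> = det (submatrix (dpp_kernel X A) T T)"
    using det_unit_cols[of "dpp_kernel X A" n "{0..<n} - T"] X G_inv(1) T
    by (auto simp: dpp_kernel_def G_def double_diff)
  finally show ?thesis
    unfolding dpp_prob_def sum_divide_distrib[symmetric] G_def[symmetric] using det_G by simp
qed

end
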